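(* For every integer $m\ge1$, $$p^{(2m)}=\sum_{a=0}^{m-1}q^{(1-2m)a}\begin{bmatrix}m-1\\ a\end{bmatrix}_{q^2}g^{(2m-2a)},\qquad p^{(2m-1)}=\sum_{a=0}^{m-1}q^{(3-2m)a}\begin{bmatrix}m-1\\ a\end{bmatrix}_{q^2}g^{(2m-2a-1)}.$$ In particular, $p^{(n)}(\kappa)\in\mathbb Z[q,q^{-1}]$ for all $n\ge0$ and all $\kappa=[2\ell]$ with $\ell\in\mathbb Z$.
   Context: $q$ is an indeterminate, $[n]=\frac{q^n-q^{-n}}{q-q^{-1}}$ for $n\in\mathbb Z$, $[n]!=[1]\cdots[n]$, $[0]!=1$. For $0\le a\le N$, $\begin{bmatrix}N\\ a\end{bmatrix}_{q^2}$ denotes the balanced Gaussian binomial coefficient in $q^2$, i.e. $\frac{[N]_{q^2}!}{[a]_{q^2}![N-a]_{q^2}!}$ with $[k]_{q^2}=\frac{q^{2k}-q^{-2k}}{q^2-q^{-2}}$. The polynomials $p_n(x)\in\mathbb Q(q)[x]$ are defined by $p_0=1$, $p_n=0$ for $n<0$, $p_{n+1}=x\,p_n+q^{1-2n}[n][n-1]p_{n-1}$ ($n\ge0$); $p^{(n)}=p_n/[n]!$. The polynomials $g_n(x)$ are $g_{2m}(x)=\prod_{i=0}^{m-1}(x^2-[2i]^2)$ and $g_{2m+1}(x)=x\prod_{i=1}^m(x^2-[2i]^2)$; $g^{(n)}=g_n/[n]!$. *)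

theory Defs
  imports "HOL-Computational_Algebra.Polynomial" "HOL-Computational_Algebra.Fraction_Field"
begin

text \<open>The field Q(q) of rational functions in the indeterminate q.\<close>
type_synonym qfield = "rat poly fract"

definition qq :: qfield where "qq = Fract [:0, 1:] 1"

definition qint :: "int \<Rightarrow> qfield" where
  "qint n = (qq powi n - qq powi (-n)) / (qq - inverse qq)"

definition qfact :: "nat \<Rightarrow> qfield" where
  "qfact n = (\<Prod>i\<in>{1..n}. qint (int i))"

definition qint2 :: "int \<Rightarrow> qfield" where
  "qint2 n = (qq powi (2*n) - qq powi (-2*n)) / (qq powi 2 - qq powi (-2))"

definition qfact2 :: "nat \<Rightarrow> qfield" where
  "qfact2 n = (\<Prod>i\<in>{1..n}. qint2 (int i))"

text \<open>Balanced Gaussian binomial in q^2 (for a \<le> N).\<close>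
definition qbinom2 :: "nat \<Rightarrow> nat \<Rightarrow> qfield" where
  "qbinom2 N a = qfact2 N / (qfact2 a * qfact2 (N - a))"

fun pp :: "nat \<Rightarrow> qfield poly" where
  "pp 0 = 1"
| "pp (Suc 0) = [:0, 1:]"
| "pp (Suc (Suc n)) = [:0, 1:] * pp (Suc n)
     + [: qq powi (1 - 2 * int (Suc n)) * qint (int (Suc n)) * qint (int n) :] * pp n"

definition pdiv :: "nat \<Rightarrow> qfield poly" where
  "pdiv n = smult (inverse (qfact n)) (pp n)"

definition gg :: "nat \<Rightarrow> qfield poly" where
  "gg n = (if even n
     then (\<Prod>i\<in>{0..<n div 2}. [: uminus ((qint (2 * int i))^2), 0, 1 :])
     else [:0, 1:] * (\<Prod>i\<in>{1..n div 2}. [: uminus ((qint (2 * int i))^2), 0, 1 :]))"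

definition gdiv :: "nat \<Rightarrow> qfield poly" where
  "gdiv n = smult (inverse (qfact n)) (gg n)"

definition laurent_Z :: "qfield set" where
  "laurent_Z = {x. \<exists>(f :: int poly) (k :: nat).
      x = Fract (map_poly rat_of_int f) 1 * qq powi (- int k)}"

end

theory Submission
  imports Defs
begin

(* Multiplication by x acts on the basis g^(k) by
     x g^(k) = [k+1] g^(k+1) + [k] g^(k-1)   (k even),     x g^(k) = [k+1] g^(k+1)   (k odd).
   Hence the claimed coefficients of p^(n) are correct once they satisfy the three-term recurrence
   of the p^(n); after the absorption identities of the q^2-binomials this reduces to two identities
   between quantum integers.

   For integrality, the q^2-binomials lie in Z[q,q^-1] by the q-Pascal rule, and g^(k)([2l]) is a
   Z[q,q^-1]-combination of the quotients [2a+2][2a+4]...[2a+2n]/[n]!. For fixed n these satisfy a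
   recurrence in a with Laurent-polynomial coefficients and vanish at a = -1, so they are Laurent
   polynomials for every integer a. *)

section \<open>Quantum integers\<close>

lemma qq_power: "qq ^ n = Fract ([:0, 1:] ^ n) 1"
  by (induction n) (auto simp: qq_def mult_fract One_fract_def)

lemma qq_power_neq_1: "n > 0 \<Longrightarrow> qq ^ n \<noteq> 1"
proof
  assume "n > 0" "qq ^ n = 1"
  then have "([:0, 1:] ^ n :: rat poly) = 1"
    by (simp add: qq_power One_fract_def eq_fract)
  then have "degree ([:0, 1:] ^ n :: rat poly) = 0" by simp
  with \<open>n > 0\<close> show False by (simp add: degree_power_eq)
qed

lemma qq_neq_0: "qq \<noteq> 0"
  by (auto simp: qq_def Zero_fract_def eq_fract)

lemma qq_power_int_neq_1: "k \<noteq> 0 \<Longrightarrow> qq powi k \<noteq> 1"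
proof
  assume k: "k \<noteq> 0" "qq powi k = 1"
  then have "qq powi \<bar>k\<bar> = 1"
    by (cases "k > 0") (auto simp: power_int_minus)
  then have "qq ^ nat \<bar>k\<bar> = 1" by (simp add: power_int_def)
  with qq_power_neq_1[of "nat \<bar>k\<bar>"] k show False by simp
qed

definition qdelta :: qfield where "qdelta = qq - inverse qq"
definition qdelta2 :: qfield where "qdelta2 = qq ^ 2 - inverse (qq ^ 2)"

lemma qdelta_neq_0: "qdelta \<noteq> 0"
proof
  assume "qdelta = 0"
  then have "qq ^ 2 = 1" using qq_neq_0 by (simp add: field_simps qdelta_def power2_eq_square)
  with qq_power_neq_1[of 2] show False by simp
qed

lemma qdelta2_neq_0: "qdelta2 \<noteq> 0"
proof
  assume "qdelta2 = 0"
  then have "qq ^ 2 * qq ^ 2 = 1" using qq_neq_0 by (simp add: field_simps qdelta2_def)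
  with qq_power_neq_1[of 4] show False by (simp flip: power_add)
qed

lemma qint_eq: "qint n = (qq powi n - inverse (qq powi n)) / qdelta"
  by (simp add: qint_def power_int_minus qdelta_def)

lemma qint2_eq: "qint2 n = (qq powi (2 * n) - inverse (qq powi (2 * n))) / qdelta2"
  by (simp add: qint2_def power_int_minus qdelta2_def)

lemma power_int_times_numeral: "(x :: 'a :: division_ring) powi (a * numeral k) = (x powi a) ^ numeral k"
  by (metis power_int_mult power_int_numeral)

lemma power_int_numeral_times: "(x :: 'a :: division_ring) powi (numeral k * a) = (x powi a) ^ numeral k"
  by (metis mult.commute power_int_times_numeral)

lemmas qpower_simps = power_int_diff power_int_add power_int_times_numeral power_int_numeral_times
  divide_inverse power_int_minus

lemma qint_0 [simp]: "qint 0 = 0"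
  by (simp add: qint_def)

lemma qint_1: "qint 1 = 1"
  using qdelta_neq_0 by (simp add: qint_def qdelta_def)

lemma qint2_0 [simp]: "qint2 0 = 0"
  by (simp add: qint2_def)

lemma qint_neq_0: "n \<noteq> 0 \<Longrightarrow> qint n \<noteq> 0"
proof
  assume n: "n \<noteq> 0" "qint n = 0"
  then have "qq powi n * qq powi n = 1"
    using qq_neq_0 qdelta_neq_0 by (simp add: qint_eq field_simps)
  then have "qq powi (n + n) = 1" using qq_neq_0 by (metis power_int_add)
  with qq_power_int_neq_1[of "n + n"] n show False by simp
qed

lemma qint_double: "qint (2 * n) = qint 2 * qint2 n"
proof -
  have "qint 2 = qdelta2 / qdelta"
    unfolding qint_eq qdelta2_def by (simp add: power_int_minus)
  then show ?thesis
    using qdelta_neq_0 qdelta2_neq_0 unfolding qint_eq[of "2 * n"] qint2_eq by (simp add: field_simps)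
qed

lemma qint2_neq_0: "n \<noteq> 0 \<Longrightarrow> qint2 n \<noteq> 0"
  using qint_neq_0[of "2 * n"] qint_double[of n] by auto

lemma qint2_split: "qint2 m = qq powi (2 * a) * qint2 (m - a) + qq powi (2 * (a - m)) * qint2 a"
  using qq_neq_0 qdelta2_neq_0 unfolding qint2_eq by (simp add: qpower_simps) (simp add: field_simps)

lemma qint_square_diff: "(qint x)\<^sup>2 - (qint y)\<^sup>2 = qint (x + y) * qint (x - y)"
  using qq_neq_0 qdelta_neq_0 unfolding qint_eq
  by (simp add: qpower_simps, simp add: field_simps, algebra)

lemma qfact_0 [simp]: "qfact 0 = 1"
  by (simp add: qfact_def)

lemma qfact2_0 [simp]: "qfact2 0 = 1"
  by (simp add: qfact2_def)

lemma qfact_Suc: "qfact (Suc n) = qfact n * qint (int (Suc n))"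
  by (simp add: qfact_def prod.nat_ivl_Suc' mult.commute)

lemma qfact2_Suc: "qfact2 (Suc n) = qfact2 n * qint2 (int (Suc n))"
  by (simp add: qfact2_def prod.nat_ivl_Suc' mult.commute)

lemma qfact_neq_0: "qfact n \<noteq> 0"
  by (induction n) (auto simp: qfact_Suc qint_neq_0)

lemma qfact2_neq_0: "qfact2 n \<noteq> 0"
  by (induction n) (auto simp: qfact2_Suc qint2_neq_0)

lemma qbinom2_0_right: "qbinom2 m 0 = 1"
  using qfact2_neq_0 by (simp add: qbinom2_def)

lemma qbinom2_diag: "qbinom2 m m = 1"
  using qfact2_neq_0 by (simp add: qbinom2_def)

lemma qbinom2_absorb_diff:
  assumes "a < m"
  shows "qint2 (int m) * qbinom2 (m - 1) a = qint2 (int m - int a) * qbinom2 m a"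
proof -
  obtain k j where m: "m = Suc k" and j: "k - a = j" using assms by (cases m) auto
  then have "Suc k - a = Suc j" "int m - int a = int (Suc j)" using assms by auto
  with m j show ?thesis unfolding qbinom2_def using qfact2_neq_0 qint2_neq_0
    by (simp add: qfact2_Suc field_simps del: of_nat_Suc)
qed

lemma qbinom2_absorb:
  assumes "1 \<le> a" "a \<le> m"
  shows "qint2 (int m) * qbinom2 (m - 1) (a - 1) = qint2 (int a) * qbinom2 m a"
proof -
  obtain k b where "m = Suc k" "a = Suc b" using assms by (cases m; cases a) auto
  then show ?thesis unfolding qbinom2_def using qfact2_neq_0 qint2_neq_0
    by (simp add: qfact2_Suc field_simps del: of_nat_Suc)
qed

lemma qbinom2_pascal:
  assumes "1 \<le> a" "a < m"
  shows "qbinom2 m a = qq powi (2 * int a) * qbinom2 (m - 1) a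
    + qq powi (2 * (int a - int m)) * qbinom2 (m - 1) (a - 1)"
proof -
  have "qint2 (int m) * (qq powi (2 * int a) * qbinom2 (m - 1) a
      + qq powi (2 * (int a - int m)) * qbinom2 (m - 1) (a - 1))
    = qq powi (2 * int a) * (qint2 (int m) * qbinom2 (m - 1) a)
      + qq powi (2 * (int a - int m)) * (qint2 (int m) * qbinom2 (m - 1) (a - 1))"
    by (simp add: algebra_simps)
  also have "\<dots> = (qq powi (2 * int a) * qint2 (int m - int a)
      + qq powi (2 * (int a - int m)) * qint2 (int a)) * qbinom2 m a"
    using assms unfolding qbinom2_absorb_diff[OF assms(2)] qbinom2_absorb[OF assms(1) less_imp_le[OF assms(2)]]
    by (simp add: algebra_simps)
  also have "\<dots> = qint2 (int m) * qbinom2 m a"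
    using qint2_split[of "int m" "int a"] by simp
  finally show ?thesis using qint2_neq_0[of "int m"] assms by simp
qed

text \<open>The balanced q^2-binomial extended by zero outside \<open>0 \<le> a \<le> N\<close>; with this convention
  the absorption identities hold for all integers \<open>a\<close>.\<close>
definition qbinom2z :: "int \<Rightarrow> int \<Rightarrow> qfield" where
  "qbinom2z N a = (if 0 \<le> a \<and> a \<le> N then qbinom2 (nat N) (nat a) else 0)"

lemma qbinom2z_absorb_diff: "qint2 m * qbinom2z (m - 1) a = qint2 (m - a) * qbinom2z m a"
proof -
  consider "a < 0" | "a > m" | "a = m" | "0 \<le> a \<and> a < m" by linarith
  then show ?thesis
  proof cases
    case 4
    then have "qint2 (int (nat m)) * qbinom2 (nat m - 1) (nat a)
        = qint2 (int (nat m) - int (nat a)) * qbinom2 (nat m) (nat a)"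
      by (intro qbinom2_absorb_diff) auto
    moreover have "nat (m - 1) = nat m - 1" by simp
    ultimately show ?thesis using 4 by (simp add: qbinom2z_def)
  qed (auto simp: qbinom2z_def)
qed

lemma qbinom2z_absorb: "qint2 m * qbinom2z (m - 1) (a - 1) = qint2 a * qbinom2z m a"
proof -
  consider "a < 0" | "a > m" | "a = 0" | "1 \<le> a \<and> a \<le> m" by linarith
  then show ?thesis
  proof cases
    case 4
    then have "qint2 (int (nat m)) * qbinom2 (nat m - 1) (nat a - 1)
        = qint2 (int (nat a)) * qbinom2 (nat m) (nat a)"
      by (intro qbinom2_absorb) auto
    moreover have "nat (m - 1) = nat m - 1" "nat (a - 1) = nat a - 1" by auto
    ultimately show ?thesis using 4 by (simp add: qbinom2z_def)
  qed (auto simp: qbinom2z_def)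
qed

section \<open>The basis g and the recurrence of p\<close>

definition gfactor :: "nat \<Rightarrow> qfield poly" where
  "gfactor i = [: - ((qint (2 * int i))\<^sup>2), 0, 1 :]"

lemma gg_even_eq: "gg (2 * j) = prod gfactor {0..<j}"
  by (simp add: gg_def gfactor_def)

lemma gg_odd_eq: "gg (Suc (2 * j)) = [:0, 1:] * prod gfactor {1..j}"
  by (simp add: gg_def gfactor_def)

lemma gg_even_Suc_eq: "gg (2 * Suc j) = [:0, 1:] * [:0, 1:] * prod gfactor {1..j}"
  unfolding gg_even_eq
  by (simp add: atLeastLessThanSuc_atLeastAtMost prod.atLeast_Suc_atMost gfactor_def)

lemma x_mult_gg:
  "[:0, 1:] * gg k = gg (Suc k) + smult (if even k then (qint (int k))\<^sup>2 else 0) (gg (k - 1))"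
proof (cases "even k")
  case True
  then obtain j where k: "k = 2 * j" by blast
  show ?thesis
  proof (cases j)
    case 0
    with k show ?thesis by (simp add: gg_def)
  next
    case (Suc i)
    define P where "P = prod gfactor {1..i}"
    have "gg k = [:0, 1:] * [:0, 1:] * P"
      unfolding k Suc P_def by (rule gg_even_Suc_eq)
    moreover have "gg (Suc k) = [:0, 1:] * (P * gfactor j)"
      unfolding k gg_odd_eq Suc P_def by (simp add: prod.cl_ivl_Suc)
    moreover have "gg (k - 1) = [:0, 1:] * P"
      using gg_odd_eq[of i] k Suc P_def by simp
    ultimately show ?thesis
      using k by (simp add: gfactor_def algebra_simps smult_add_right)
  qed
next
  case False
  then obtain j where k: "k = Suc (2 * j)" by (metis oddE Suc_eq_plus1)
  then have "gg (Suc k) = [:0, 1:] * gg k"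
    using gg_even_Suc_eq[of j] by (simp add: gg_odd_eq mult.assoc)
  with False show ?thesis by simp
qed

lemma x_mult_gdiv:
  "[:0, 1:] * gdiv k = smult (qint (int (Suc k))) (gdiv (Suc k))
     + smult (if even k then qint (int k) else 0) (gdiv (k - 1))"
proof (cases k)
  case 0
  then show ?thesis using x_mult_gg[of 0] qint_1
    by (simp add: gdiv_def qfact_Suc)
next
  case (Suc j)
  have "qint (int (Suc k)) * inverse (qfact (Suc k)) = inverse (qfact k)"
    using qfact_neq_0 qint_neq_0[of "int (Suc k)"]
    by (simp add: qfact_Suc field_simps del: of_nat_Suc)
  moreover have "(if even k then qint (int k) else 0) * inverse (qfact j)
      = inverse (qfact k) * (if even k then (qint (int k))\<^sup>2 else 0)"
    using qfact_neq_0 qint_neq_0[of "int k"] Suc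
    by (simp add: qfact_Suc field_simps power2_eq_square del: of_nat_Suc)
  ultimately show ?thesis
    unfolding gdiv_def mult_smult_right x_mult_gg smult_add_right smult_smult
    using Suc by simp
qed

lemma pdiv_recurrence:
  "smult (qint (int (n + 2))) (pdiv (n + 2))
     = [:0, 1:] * pdiv (Suc n) + smult (qq powi (-1 - 2 * int n) * qint (int n)) (pdiv n)"
proof -
  have leading: "qint (int (n + 2)) * inverse (qfact (n + 2)) = inverse (qfact (Suc n))"
    using qfact_neq_0 qint_neq_0[of "int (n + 2)"]
    by (simp add: qfact_Suc field_simps del: of_nat_Suc)
  have trailing: "inverse (qfact (Suc n)) * (qq powi (- 1 - 2 * int n) * qint (1 + int n) * qint (int n))
      = qq powi (-1 - 2 * int n) * qint (int n) * inverse (qfact n)"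
    using qfact_neq_0 qint_neq_0[of "1 + int n"] by (simp add: qfact_Suc field_simps)
  show ?thesis
    unfolding pdiv_def mult_smult_right smult_smult leading
    by (simp add: smult_add_right smult_smult trailing)
qed

section \<open>The coefficients of p in the basis g\<close>

lemma qint_identity_odd:
  "qint2 m * qint (2 * m + 1) * qq powi a
   = qint (2 * m + 1 - 2 * a) * qq powi a * qint2 (m - a)
     + (qint (2 * m + 2 - 2 * a) * qq powi (a + 2 * m - 1)
        + qq powi (1 - 4 * m) * qint (2 * m - 1) * qq powi (3 * a - 3 + 2 * m)) * qint2 a"
  using qq_neq_0 qdelta_neq_0 qdelta2_neq_0 unfolding qint_eq qint2_eq
  by (simp add: qpower_simps, simp add: field_simps, algebra)

lemma qint_identity_even:
  "qint (2 * m + 2) * qq powi (- a)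
   = qint (2 * m + 2 - 2 * a) * qq powi a + qq powi (a - 2 * m - 2) * qint (2 * a)"
  using qq_neq_0 qdelta_neq_0 unfolding qint_eq
  by (simp add: qpower_simps, simp add: field_simps, algebra)

text \<open>The recurrence of \<open>pdiv\<close>, read on the coefficients of \<open>gdiv k\<close> with \<open>n + 2 - k = 2 a\<close>, for
  \<open>n = 2m - 1\<close> and for \<open>n = 2m\<close>.\<close>
lemma qbinom2z_recurrence_odd:
  assumes m: "m \<ge> 1"
  shows "qint (2 * m + 1) * (qq powi ((1 - 2 * m) * a) * qbinom2z m a)
    = qint (2 * m + 1 - 2 * a) * (qq powi ((1 - 2 * m) * a) * qbinom2z (m - 1) a)
      + qint (2 * m + 2 - 2 * a) * (qq powi ((1 - 2 * m) * (a - 1)) * qbinom2z (m - 1) (a - 1))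
      + qq powi (1 - 4 * m) * qint (2 * m - 1)
        * (qq powi ((3 - 2 * m) * (a - 1)) * qbinom2z (m - 1) (a - 1))"
    (is "?L = ?R")
proof -
  define Z where "Z = qq powi (- 2 * m * a)"
  have p1: "qq powi ((1 - 2 * m) * a) = Z * qq powi a"
    and p2: "qq powi ((1 - 2 * m) * (a - 1)) = Z * qq powi (a + 2 * m - 1)"
    and p3: "qq powi ((3 - 2 * m) * (a - 1)) = Z * qq powi (3 * a - 3 + 2 * m)"
    unfolding Z_def using qq_neq_0 by (simp_all add: power_int_add[symmetric] algebra_simps)
  have "qint2 m * ?R = qint (2 * m + 1 - 2 * a) * Z * qq powi a * (qint2 m * qbinom2z (m - 1) a)
      + (qint (2 * m + 2 - 2 * a) * Z * qq powi (a + 2 * m - 1)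
         + qq powi (1 - 4 * m) * qint (2 * m - 1) * Z * qq powi (3 * a - 3 + 2 * m))
        * (qint2 m * qbinom2z (m - 1) (a - 1))"
    unfolding p1 p2 p3 by (simp add: algebra_simps)
  also have "\<dots> = Z * qbinom2z m a * (qint (2 * m + 1 - 2 * a) * qq powi a * qint2 (m - a)
      + (qint (2 * m + 2 - 2 * a) * qq powi (a + 2 * m - 1)
         + qq powi (1 - 4 * m) * qint (2 * m - 1) * qq powi (3 * a - 3 + 2 * m)) * qint2 a)"
    unfolding qbinom2z_absorb_diff[of m a] qbinom2z_absorb[of m a] by (simp add: algebra_simps)
  also have "\<dots> = qint2 m * ?L"
    unfolding qint_identity_odd[symmetric] p1 by (simp add: algebra_simps)
  finally show ?thesis using qint2_neq_0[of m] m by simp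
qed

lemma qbinom2z_recurrence_even:
  "qint (2 * m + 2) * (qq powi ((- 1 - 2 * m) * a) * qbinom2z m a)
    = qint (2 * m + 2 - 2 * a) * (qq powi ((1 - 2 * m) * a) * qbinom2z m a)
      + qq powi (- 1 - 4 * m) * qint (2 * m) * (qq powi ((1 - 2 * m) * (a - 1)) * qbinom2z (m - 1) (a - 1))"
    (is "?L = ?R")
proof -
  define Z where "Z = qq powi (- 2 * m * a)"
  have p0: "qq powi ((- 1 - 2 * m) * a) = Z * qq powi (- a)"
    and p1: "qq powi ((1 - 2 * m) * a) = Z * qq powi a"
    and p2: "qq powi ((1 - 2 * m) * (a - 1)) = Z * qq powi (a + 2 * m - 1)"
    and p3: "qq powi (- 1 - 4 * m) * qq powi (a + 2 * m - 1) = qq powi (a - 2 * m - 2)"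
    unfolding Z_def using qq_neq_0 by (simp_all add: power_int_add[symmetric] algebra_simps)
  have "?R = qint (2 * m + 2 - 2 * a) * Z * qq powi a * qbinom2z m a
      + qint 2 * Z * (qq powi (- 1 - 4 * m) * qq powi (a + 2 * m - 1)) * (qint2 m * qbinom2z (m - 1) (a - 1))"
    unfolding p1 p2 qint_double by (simp add: algebra_simps)
  also have "\<dots> = Z * qbinom2z m a * (qint (2 * m + 2 - 2 * a) * qq powi a + qq powi (a - 2 * m - 2) * (qint 2 * qint2 a))"
    unfolding qbinom2z_absorb p3 by (simp add: algebra_simps)
  also have "\<dots> = ?L"
    unfolding qint_double[symmetric] qint_identity_even[symmetric] p0 by (simp add: algebra_simps)
  finally show ?thesis ..
qed

text \<open>The coefficient of \<open>gdiv k\<close> in \<open>pdiv n\<close> claimed by the theorem: writing \<open>n - k = 2 a\<close>, it is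
  \<open>q^((1 - 2m) a) [m - 1, a]\<close> for \<open>n = 2m\<close> and \<open>q^((3 - 2m) a) [m - 1, a]\<close> for \<open>n = 2m - 1\<close>.\<close>
definition pg_exp :: "nat \<Rightarrow> int" where
  "pg_exp n = (if even n then 1 - int n else 2 - int n)"

definition pg_top :: "nat \<Rightarrow> int" where
  "pg_top n = int ((n + 1) div 2) - 1"

definition pg_coeff :: "nat \<Rightarrow> nat \<Rightarrow> qfield" where
  "pg_coeff n k = (if n = 0 then (if k = 0 then 1 else 0)
     else if even (int n - int k)
       then qq powi (pg_exp n * ((int n - int k) div 2)) * qbinom2z (pg_top n) ((int n - int k) div 2)
     else 0)"

lemma pg_params_even: "int n = 2 * m \<Longrightarrow> pg_exp n = 1 - 2 * m \<and> pg_top n = m - 1"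
  unfolding pg_exp_def pg_top_def by presburger

lemma pg_params_odd: "int n = 2 * m - 1 \<Longrightarrow> pg_exp n = 3 - 2 * m \<and> pg_top n = m - 1"
  unfolding pg_exp_def pg_top_def by presburger

lemma pg_coeff_eq:
  "n \<ge> 1 \<Longrightarrow> int n - int k = 2 * a \<Longrightarrow> pg_coeff n k = qq powi (pg_exp n * a) * qbinom2z (pg_top n) a"
  unfolding pg_coeff_def by simp

lemma pg_coeff_odd_diff: "n \<ge> 1 \<Longrightarrow> odd (int n - int k) \<Longrightarrow> pg_coeff n k = 0"
  unfolding pg_coeff_def by simp

lemma pg_coeff_gt: "k > n \<Longrightarrow> pg_coeff n k = 0"
  unfolding pg_coeff_def qbinom2z_def by auto

lemma pg_coeff_0_right: "n \<ge> 1 \<Longrightarrow> pg_coeff n 0 = 0"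
  unfolding pg_coeff_def qbinom2z_def pg_top_def by auto

lemma pg_coeff_recurrence_even:
  assumes n: "int n = 2 * m" and k: "int k = 2 * m + 2 - 2 * a" "k \<ge> 1"
  shows "qint (int (n + 2)) * pg_coeff (n + 2) k
    = qint (int k) * pg_coeff (Suc n) (k - 1)
      + (if even (Suc k) then qint (int (Suc k)) else 0) * pg_coeff (Suc n) (Suc k)
      + qq powi (- 1 - 2 * int n) * qint (int n) * pg_coeff n k"
proof -
  have e: "pg_exp (n + 2) = - 1 - 2 * m" "pg_top (n + 2) = m"
    "pg_exp (Suc n) = 1 - 2 * m" "pg_top (Suc n) = m"
    using pg_params_even[of "n + 2" "m + 1"] pg_params_odd[of "Suc n" "m + 1"] n
    by (simp_all add: algebra_simps)
  have d: "int (n + 2) - int k = 2 * a" "int (Suc n) - int (k - 1) = 2 * a"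
    using n k by linarith+
  have c: "pg_coeff (n + 2) k = qq powi ((- 1 - 2 * m) * a) * qbinom2z m a"
    "pg_coeff (Suc n) (k - 1) = qq powi ((1 - 2 * m) * a) * qbinom2z m a"
    using pg_coeff_eq[OF _ d(1)] pg_coeff_eq[OF _ d(2)] e by simp_all
  have c': "qq powi (- 1 - 2 * int n) * qint (int n) * pg_coeff n k
      = qq powi (- 1 - 4 * m) * qint (2 * m)
        * (qq powi ((1 - 2 * m) * (a - 1)) * qbinom2z (m - 1) (a - 1))"
  proof (cases "n = 0")
    case False
    have "int n - int k = 2 * (a - 1)" using n k by simp
    with False show ?thesis
      using pg_coeff_eq[of n k "a - 1"] pg_params_even[OF n] n by simp
  qed (use n in simp)
  have "odd (Suc k)" and q: "int (n + 2) = 2 * m + 2" using n k by presburger+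
  then show ?thesis
    unfolding c c' q k(1) using qbinom2z_recurrence_even[of m a] by simp
qed

lemma pg_coeff_recurrence_odd:
  assumes n: "int n = 2 * m - 1" and k: "int k = 2 * m + 1 - 2 * a" "k \<ge> 1"
  shows "qint (int (n + 2)) * pg_coeff (n + 2) k
    = qint (int k) * pg_coeff (Suc n) (k - 1)
      + (if even (Suc k) then qint (int (Suc k)) else 0) * pg_coeff (Suc n) (Suc k)
      + qq powi (- 1 - 2 * int n) * qint (int n) * pg_coeff n k"
proof -
  have m: "m \<ge> 1" using n by simp
  have e: "pg_exp (n + 2) = 1 - 2 * m" "pg_top (n + 2) = m"
    "pg_exp (Suc n) = 1 - 2 * m" "pg_top (Suc n) = m - 1"
    "pg_exp n = 3 - 2 * m" "pg_top n = m - 1"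
    using pg_params_odd[of "n + 2" "m + 1"] pg_params_even[of "Suc n" m] pg_params_odd[OF n] n
    by (simp_all add: algebra_simps)
  have d: "int (n + 2) - int k = 2 * a" "int (Suc n) - int (k - 1) = 2 * a"
    "int (Suc n) - int (Suc k) = 2 * (a - 1)" "int n - int k = 2 * (a - 1)"
    using n k by (simp_all add: algebra_simps)
  have c: "pg_coeff (n + 2) k = qq powi ((1 - 2 * m) * a) * qbinom2z m a"
    "pg_coeff (Suc n) (k - 1) = qq powi ((1 - 2 * m) * a) * qbinom2z (m - 1) a"
    "pg_coeff (Suc n) (Suc k) = qq powi ((1 - 2 * m) * (a - 1)) * qbinom2z (m - 1) (a - 1)"
    "pg_coeff n k = qq powi ((3 - 2 * m) * (a - 1)) * qbinom2z (m - 1) (a - 1)"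
    using pg_coeff_eq[OF _ d(1)] pg_coeff_eq[OF _ d(2)] pg_coeff_eq[OF _ d(3)] pg_coeff_eq[OF _ d(4)]
      e m n by simp_all
  have "even (Suc k)" and q: "int (n + 2) = 2 * m + 1" "int (Suc k) = 2 * m + 2 - 2 * a"
    "- 1 - 2 * int n = 1 - 4 * m"
    using n k by presburger+
  then show ?thesis
    unfolding c q k(1) n using qbinom2z_recurrence_odd[OF m, of a] by simp
qed

lemma pg_coeff_recurrence:
  "qint (int (n + 2)) * pg_coeff (n + 2) k
    = qint (int k) * pg_coeff (Suc n) (k - 1)
      + (if even (Suc k) then qint (int (Suc k)) else 0) * pg_coeff (Suc n) (Suc k)
      + qq powi (- 1 - 2 * int n) * qint (int n) * pg_coeff n k"
proof -
  consider "k = 0" | "k \<ge> 1" "odd (int n - int k)"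
    | "k \<ge> 1" "even (int n - int k)" "even n" | "k \<ge> 1" "even (int n - int k)" "odd n"
    by linarith
  then show ?thesis
  proof cases
    case 1
    then show ?thesis using pg_coeff_0_right[of "n + 2"] pg_coeff_0_right[of n]
      by (cases "n = 0") auto
  next
    case 2
    then have "pg_coeff (n + 2) k = 0" "pg_coeff (Suc n) (k - 1) = 0" "pg_coeff (Suc n) (Suc k) = 0"
      "pg_coeff n k = 0"
      by (auto intro!: pg_coeff_odd_diff simp: pg_coeff_def)
    then show ?thesis by simp
  next
    case 3
    define m where "m = int n div 2"
    have "int n = 2 * m" "int k = 2 * m + 2 - 2 * (m + 1 - int k div 2)"
      using 3 unfolding m_def by presburger+
    with 3 show ?thesis by (intro pg_coeff_recurrence_even)
  next
    case 4
    define m where "m = (int n + 1) div 2"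
    have "int n = 2 * m - 1" "int k = 2 * m + 1 - 2 * (m - (int k - 1) div 2)"
      using 4 unfolding m_def by presburger+
    with 4 show ?thesis by (intro pg_coeff_recurrence_odd)
  qed
qed

definition pg_expansion :: "nat \<Rightarrow> qfield poly" where
  "pg_expansion n = (\<Sum>k\<le>n. smult (pg_coeff n k) (gdiv k))"

lemma pg_expansion_atMost: "n \<le> N \<Longrightarrow> pg_expansion n = (\<Sum>k\<le>N. smult (pg_coeff n k) (gdiv k))"
  unfolding pg_expansion_def by (rule sum.mono_neutral_left) (auto simp: pg_coeff_gt)

lemma smult_sum_right: "smult a (sum f S) = (\<Sum>i\<in>S. smult a (f i))"
  by (induct S rule: infinite_finite_induct) (auto simp: smult_add_right)

lemma x_mult_pg_expansion:
  "[:0, 1:] * pg_expansion (Suc n) = (\<Sum>j\<le>n + 2. smult (qint (int j) * pg_coeff (Suc n) (j - 1)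
     + (if even (Suc j) then qint (int (Suc j)) else 0) * pg_coeff (Suc n) (Suc j)) (gdiv j))"
proof -
  define c where "c k = (if even k then qint (int k) else 0)" for k
  have "[:0, 1:] * pg_expansion (Suc n)
    = (\<Sum>k\<le>Suc n. smult (pg_coeff (Suc n) k * qint (int (Suc k))) (gdiv (Suc k)))
      + (\<Sum>k\<le>Suc n. smult (pg_coeff (Suc n) k * c k) (gdiv (k - 1)))"
    unfolding pg_expansion_def sum_distrib_left mult_smult_right x_mult_gdiv c_def
    by (simp add: sum.distrib smult_add_right smult_smult)
  also have "(\<Sum>k\<le>Suc n. smult (pg_coeff (Suc n) k * qint (int (Suc k))) (gdiv (Suc k)))
      = (\<Sum>j\<le>n + 2. smult (qint (int j) * pg_coeff (Suc n) (j - 1)) (gdiv j))"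
    using sum.atMost_Suc_shift[of "\<lambda>j. smult (qint (int j) * pg_coeff (Suc n) (j - 1)) (gdiv j)" "Suc n"]
    by (simp add: mult.commute)
  also have "(\<Sum>k\<le>Suc n. smult (pg_coeff (Suc n) k * c k) (gdiv (k - 1)))
      = (\<Sum>j\<le>n. smult (c (Suc j) * pg_coeff (Suc n) (Suc j)) (gdiv j))"
    using sum.atMost_Suc_shift[of "\<lambda>k. smult (pg_coeff (Suc n) k * c k) (gdiv (k - 1))" n]
    by (simp add: c_def mult.commute)
  also have "\<dots> = (\<Sum>j\<le>n + 2. smult (c (Suc j) * pg_coeff (Suc n) (Suc j)) (gdiv j))"
    by (rule sum.mono_neutral_left) (auto simp: pg_coeff_gt)
  finally show ?thesis
    by (simp add: c_def sum.distrib[symmetric] smult_add_left)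
qed

lemma pg_expansion_recurrence:
  "smult (qint (int (n + 2))) (pg_expansion (n + 2))
     = [:0, 1:] * pg_expansion (Suc n) + smult (qq powi (- 1 - 2 * int n) * qint (int n)) (pg_expansion n)"
proof -
  have "smult (qq powi (- 1 - 2 * int n) * qint (int n)) (pg_expansion n)
      = (\<Sum>j\<le>n + 2. smult (qq powi (- 1 - 2 * int n) * qint (int n) * pg_coeff n j) (gdiv j))"
    unfolding pg_expansion_atMost[of n "n + 2", OF le_add1] by (simp only: smult_sum_right smult_smult)
  then have "[:0, 1:] * pg_expansion (Suc n) + smult (qq powi (- 1 - 2 * int n) * qint (int n)) (pg_expansion n)
      = (\<Sum>j\<le>n + 2. smult (qint (int j) * pg_coeff (Suc n) (j - 1)
          + (if even (Suc j) then qint (int (Suc j)) else 0) * pg_coeff (Suc n) (Suc j)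
          + qq powi (- 1 - 2 * int n) * qint (int n) * pg_coeff n j) (gdiv j))"
    unfolding x_mult_pg_expansion by (simp only: smult_add_left sum.distrib)
  also have "\<dots> = (\<Sum>j\<le>n + 2. smult (qint (int (n + 2)) * pg_coeff (n + 2) j) (gdiv j))"
    by (simp only: pg_coeff_recurrence)
  also have "\<dots> = smult (qint (int (n + 2))) (pg_expansion (n + 2))"
    unfolding pg_expansion_def by (simp only: smult_sum_right smult_smult)
  finally show ?thesis ..
qed

lemma pdiv_eq_pg_expansion: "pdiv n = pg_expansion n"
proof (induction n rule: pp.induct)
  case 1
  then show ?case by (simp add: pdiv_def pg_expansion_def pg_coeff_def gdiv_def gg_def)
next
  case 2
  have "pg_coeff 1 1 = 1" "pg_coeff 1 0 = 0"
    by (auto simp: pg_coeff_def pg_exp_def pg_top_def qbinom2z_def qbinom2_def)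
  then show ?case
    using qint_1 by (simp add: pdiv_def pg_expansion_def gdiv_def gg_def qfact_def)
next
  case (3 n)
  have "qint (int (n + 2)) \<noteq> 0" by (rule qint_neq_0) simp
  moreover have "smult (qint (int (n + 2))) (pdiv (n + 2)) = smult (qint (int (n + 2))) (pg_expansion (n + 2))"
    unfolding pdiv_recurrence pg_expansion_recurrence using 3 by simp
  ultimately show ?case using smult_cancel by fastforce
qed

lemma sum_atMost_sparse_reindex:
  fixes f :: "nat \<Rightarrow> 'a::comm_monoid_add"
  assumes "2 * M \<le> N"
    and "\<And>a. a \<le> M \<Longrightarrow> f (N - 2 * a) = g a"
    and "\<And>k. k \<le> N \<Longrightarrow> k \<notin> (\<lambda>a. N - 2 * a) ` {..M} \<Longrightarrow> f k = 0"
  shows "(\<Sum>k\<le>N. f k) = (\<Sum>a\<le>M. g a)"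
proof -
  have "inj_on (\<lambda>a. N - 2 * a) {..M}"
    using assms(1) by (auto simp: inj_on_def)
  then have "(\<Sum>a\<le>M. g a) = sum f ((\<lambda>a. N - 2 * a) ` {..M})"
    using assms(2) by (simp add: sum.reindex)
  also have "\<dots> = (\<Sum>k\<le>N. f k)"
    by (rule sum.mono_neutral_left) (use assms(3) in auto)
  finally show ?thesis ..
qed

lemma pdiv_expansion:
  assumes n: "n \<ge> 1"
  shows "pdiv n = (\<Sum>a\<le>(n + 1) div 2 - 1.
    smult (qq powi (pg_exp n * int a) * qbinom2 ((n + 1) div 2 - 1) a) (gdiv (n - 2 * a)))"
proof -
  define M where "M = (n + 1) div 2 - 1"
  have top: "pg_top n = int M" and M: "2 * M < n"
    using n unfolding pg_top_def M_def by auto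
  show ?thesis
    unfolding pdiv_eq_pg_expansion pg_expansion_def M_def[symmetric]
  proof (rule sum_atMost_sparse_reindex)
    fix a assume "a \<le> M"
    with M have "int n - int (n - 2 * a) = 2 * int a" by simp
    with n \<open>a \<le> M\<close> show "smult (pg_coeff n (n - 2 * a)) (gdiv (n - 2 * a))
        = smult (qq powi (pg_exp n * int a) * qbinom2 M a) (gdiv (n - 2 * a))"
      using pg_coeff_eq top by (simp add: qbinom2z_def)
  next
    fix k assume k: "k \<le> n" "k \<notin> (\<lambda>a. n - 2 * a) ` {..M}"
    show "smult (pg_coeff n k) (gdiv k) = 0"
    proof (cases "even (int n - int k)")
      case True
      define a where "a = (n - k) div 2"
      have d: "int n - int k = 2 * int a" and "k = n - 2 * a"
        using True k(1) unfolding a_def by presburger+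
      with k(2) have "a > M" by auto
      with pg_coeff_eq[OF n d] top show ?thesis by (simp add: qbinom2z_def)
    next
      case False
      with n have "pg_coeff n k = 0" by (intro pg_coeff_odd_diff)
      then show ?thesis by simp
    qed
  qed (use M in simp)
qed

lemma pdiv_even_expansion:
  assumes "m \<ge> 1"
  shows "pdiv (2 * m) = (\<Sum>a = 0..m - 1.
    smult (qq powi ((1 - 2 * int m) * int a) * qbinom2 (m - 1) a) (gdiv (2 * m - 2 * a)))"
  using pdiv_expansion[of "2 * m"] pg_params_even[of "2 * m" "int m"] assms
  by (simp add: atLeast0AtMost)

lemma pdiv_odd_expansion:
  assumes "m \<ge> 1"
  shows "pdiv (2 * m - 1) = (\<Sum>a = 0..m - 1.
    smult (qq powi ((3 - 2 * int m) * int a) * qbinom2 (m - 1) a) (gdiv (2 * m - 2 * a - 1)))"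
  using pdiv_expansion[of "2 * m - 1"] pg_params_odd[of "2 * m - 1" "int m"] assms
  by (simp add: atLeast0AtMost)

section \<open>Laurent polynomials\<close>

lemma of_int_fract: "(of_int k :: 'a::idom fract) = Fract (of_int k) 1"
proof (cases k rule: int_cases)
  case (nonneg n)
  then show ?thesis by (simp add: of_nat_fract)
next
  case (neg n)
  then show ?thesis by (simp add: of_nat_fract minus_fract del: of_nat_Suc)
qed

lemma map_poly_of_int_add:
  "map_poly (of_int :: int \<Rightarrow> 'a::comm_ring_1) (f + g) = map_poly of_int f + map_poly of_int g"
  by (rule poly_eqI) (simp add: coeff_map_poly)

lemma map_poly_of_int_mult:
  "map_poly (of_int :: int \<Rightarrow> 'a::comm_ring_1) (f * g) = map_poly of_int f * map_poly of_int g"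
  by (rule poly_eqI) (simp add: coeff_map_poly coeff_mult)

lemma Fract_map_poly_of_int: "Fract (map_poly rat_of_int f) 1 = poly (map_poly of_int f) qq"
proof (induction f rule: pCons_induct)
  case 0
  then show ?case by (simp add: Zero_fract_def)
next
  case (pCons a p)
  have "Fract (map_poly rat_of_int (pCons a p)) 1
      = Fract ([:rat_of_int a:] + [:0, 1:] * map_poly rat_of_int p) 1"
    by (simp add: map_poly_pCons)
  also have "\<dots> = Fract [:rat_of_int a:] 1 + qq * Fract (map_poly rat_of_int p) 1"
    by (simp add: qq_def)
  also have "Fract [:rat_of_int a:] (1 :: rat poly) = of_int a"
    by (simp add: of_int_fract of_int_poly)
  finally show ?case using pCons.IH by (simp add: map_poly_pCons)
qed

definition poly_Z :: "qfield set" where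
  "poly_Z = {poly (map_poly of_int f) qq | f. True}"

lemma poly_Z_add: "x \<in> poly_Z \<Longrightarrow> y \<in> poly_Z \<Longrightarrow> x + y \<in> poly_Z"
  unfolding poly_Z_def by (auto simp flip: poly_add map_poly_of_int_add)

lemma poly_Z_mult: "x \<in> poly_Z \<Longrightarrow> y \<in> poly_Z \<Longrightarrow> x * y \<in> poly_Z"
  unfolding poly_Z_def by (auto simp flip: poly_mult map_poly_of_int_mult)

lemma poly_Z_of_int: "of_int k \<in> poly_Z"
  unfolding poly_Z_def by (auto intro!: exI[of _ "[:k:]"] simp: map_poly_pCons)

lemma poly_Z_qq_power: "qq ^ n \<in> poly_Z"
proof -
  have "qq \<in> poly_Z"
    unfolding poly_Z_def by (auto intro!: exI[of _ "[:0, 1:]"] simp: map_poly_pCons)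
  then show ?thesis
    by (induction n) (use poly_Z_of_int[of 1] poly_Z_mult in auto)
qed

lemma laurent_Z_eq: "laurent_Z = {x * qq powi (- int k) | x k. x \<in> poly_Z}"
  unfolding laurent_Z_def poly_Z_def Fract_map_poly_of_int by blast

lemma laurent_Z_add: "x \<in> laurent_Z \<Longrightarrow> y \<in> laurent_Z \<Longrightarrow> x + y \<in> laurent_Z"
proof -
  assume "x \<in> laurent_Z" "y \<in> laurent_Z"
  then obtain a k b j where a: "a \<in> poly_Z" "x = a * qq powi (- int k)"
    and b: "b \<in> poly_Z" "y = b * qq powi (- int j)"
    unfolding laurent_Z_eq by blast
  have "x + y = (a * qq ^ j + b * qq ^ k) * qq powi (- int (k + j))"
    unfolding a b power_int_minus power_int_of_nat using qq_neq_0 by (simp add: field_simps power_add)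
  moreover have "a * qq ^ j + b * qq ^ k \<in> poly_Z"
    using a b poly_Z_qq_power poly_Z_mult poly_Z_add by blast
  ultimately show ?thesis unfolding laurent_Z_eq by blast
qed

lemma laurent_Z_mult: "x \<in> laurent_Z \<Longrightarrow> y \<in> laurent_Z \<Longrightarrow> x * y \<in> laurent_Z"
proof -
  assume "x \<in> laurent_Z" "y \<in> laurent_Z"
  then obtain a k b j where a: "a \<in> poly_Z" "x = a * qq powi (- int k)"
    and b: "b \<in> poly_Z" "y = b * qq powi (- int j)"
    unfolding laurent_Z_eq by blast
  have "x * y = (a * b) * qq powi (- int (k + j))"
    unfolding a b power_int_minus power_int_of_nat using qq_neq_0 by (simp add: field_simps power_add)
  moreover have "a * b \<in> poly_Z" using a b poly_Z_mult by blast
  ultimately show ?thesis unfolding laurent_Z_eq by blast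
qed

lemma poly_Z_subset_laurent_Z: "poly_Z \<subseteq> laurent_Z"
proof
  fix x assume "x \<in> poly_Z"
  moreover have "x = x * qq powi (- int 0)" by simp
  ultimately show "x \<in> laurent_Z" unfolding laurent_Z_eq by blast
qed

lemma laurent_Z_of_int: "of_int k \<in> laurent_Z"
  using poly_Z_of_int poly_Z_subset_laurent_Z by blast

lemma laurent_Z_0: "0 \<in> laurent_Z"
  using laurent_Z_of_int[of 0] by simp

lemma laurent_Z_1: "1 \<in> laurent_Z"
  using laurent_Z_of_int[of 1] by simp

lemma laurent_Z_power_int: "qq powi z \<in> laurent_Z"
proof (cases "z \<ge> 0")
  case True
  then have "qq powi z = qq ^ nat z" by (simp add: power_int_def)
  then show ?thesis using subsetD[OF poly_Z_subset_laurent_Z poly_Z_qq_power] by simp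
next
  case False
  then have "qq powi z = 1 * qq powi (- int (nat (- z)))" by simp
  moreover have "(1 :: qfield) \<in> poly_Z" using poly_Z_of_int[of 1] by simp
  ultimately show ?thesis unfolding laurent_Z_eq by (intro CollectI exI conjI)
qed

lemma laurent_Z_diff: "x \<in> laurent_Z \<Longrightarrow> y \<in> laurent_Z \<Longrightarrow> x - y \<in> laurent_Z"
  using laurent_Z_add[of x "of_int (- 1) * y"] laurent_Z_mult[OF laurent_Z_of_int[of "- 1"], of y] by simp

lemma laurent_Z_sum: "(\<And>i. i \<in> A \<Longrightarrow> f i \<in> laurent_Z) \<Longrightarrow> sum f A \<in> laurent_Z"
  by (induction A rule: infinite_finite_induct) (auto simp: laurent_Z_0 laurent_Z_add)

section \<open>Integrality at the points [2l]\<close>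

lemma qbinom2_in_laurent_Z: "a \<le> m \<Longrightarrow> qbinom2 m a \<in> laurent_Z"
proof (induction m arbitrary: a)
  case 0
  then show ?case using qbinom2_0_right laurent_Z_1 by simp
next
  case (Suc m)
  consider "a = 0" | "a = Suc m" | "1 \<le> a" "a \<le> m" using Suc.prems by linarith
  then show ?case
  proof cases
    case 3
    then have "qbinom2 (Suc m) a = qq powi (2 * int a) * qbinom2 m a
        + qq powi (2 * (int a - int (Suc m))) * qbinom2 m (a - 1)"
      using qbinom2_pascal[of a "Suc m"] by simp
    moreover have "qbinom2 m a \<in> laurent_Z" "qbinom2 m (a - 1) \<in> laurent_Z"
      using Suc.IH 3 by auto
    ultimately show ?thesis using laurent_Z_add laurent_Z_mult laurent_Z_power_int by simp
  qed (use qbinom2_0_right qbinom2_diag laurent_Z_1 in simp_all)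
qed

definition qint_even_prod :: "int \<Rightarrow> nat \<Rightarrow> qfield" where
  "qint_even_prod a n = (\<Prod>i\<in>{1..n}. qint (2 * (a + int i)))"

definition qint_even_ratio :: "int \<Rightarrow> nat \<Rightarrow> qfield" where
  "qint_even_ratio a n = qint_even_prod a n / qfact n"

lemma qint_even_prod_Suc:
  "qint_even_prod a (Suc n) = qint_even_prod a n * qint (2 * (a + int (Suc n)))"
  by (simp add: qint_even_prod_def)

lemma qint_even_prod_shift: "qint_even_prod (a - 1) (Suc n) = qint (2 * a) * qint_even_prod a n"
proof (induction n)
  case 0
  then show ?case by (simp add: qint_even_prod_def)
next
  case (Suc n)
  have "qint_even_prod (a - 1) (Suc (Suc n))
      = qint_even_prod (a - 1) (Suc n) * qint (2 * (a + int (Suc n)))"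
    using qint_even_prod_Suc[of "a - 1" "Suc n"] by (simp add: algebra_simps)
  then show ?case using Suc by (simp add: qint_even_prod_Suc algebra_simps)
qed

lemma qint_add_even:
  "qint (2 * a + 2 * N) = qq powi (2 * N) * qint (2 * a) + qq powi (- 2 * a) * (qq powi N + qq powi (- N)) * qint N"
  using qq_neq_0 qdelta_neq_0 unfolding qint_eq
  by (simp add: qpower_simps, simp add: field_simps, algebra)

lemma qint_even_ratio_Suc:
  "qint_even_ratio a (Suc n) = qq powi (2 * (int n + 1)) * qint_even_ratio (a - 1) (Suc n)
    + qq powi (- 2 * a) * (qq powi (int n + 1) + qq powi (- (int n + 1))) * qint_even_ratio a n"
proof -
  have "qfact (Suc n) = qfact n * qint (int n + 1)" by (simp add: qfact_Suc add.commute)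
  moreover have "qint_even_prod a (Suc n) = qint_even_prod a n * qint (2 * a + 2 * (int n + 1))"
    by (simp add: qint_even_prod_Suc algebra_simps)
  moreover have "qfact n \<noteq> 0" "qint (int n + 1) \<noteq> 0"
    using qfact_neq_0 qint_neq_0[of "int n + 1"] by auto
  ultimately show ?thesis
    unfolding qint_even_ratio_def qint_even_prod_shift qint_add_even by (simp add: field_simps)
qed

text \<open>For fixed \<open>n\<close> the recurrence in \<open>a\<close> is run in both directions from \<open>a = -1\<close>, where the
  product contains the factor \<open>[0] = 0\<close>.\<close>
lemma qint_even_ratio_in_laurent_Z: "qint_even_ratio a n \<in> laurent_Z"
proof (induction n arbitrary: a)
  case 0
  then show ?case using laurent_Z_1 by (simp add: qint_even_ratio_def qint_even_prod_def)
next
  case (Suc n)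
  define T where "T a = qq powi (- 2 * a) * (qq powi (int n + 1) + qq powi (- (int n + 1)))
    * qint_even_ratio a n" for a
  have T: "T a \<in> laurent_Z" for a
    unfolding T_def using Suc.IH laurent_Z_mult laurent_Z_add laurent_Z_power_int by simp
  have rec: "qint_even_ratio a (Suc n) = qq powi (2 * (int n + 1)) * qint_even_ratio (a - 1) (Suc n) + T a"
    for a
    unfolding T_def by (rule qint_even_ratio_Suc)
  show ?case
  proof (induction a rule: int_induct[where k = "- 1"])
    case base
    have "qint_even_prod (0 - 1) (Suc n) = 0" using qint_even_prod_shift[of 0 n] by simp
    then show ?case using laurent_Z_0 by (simp add: qint_even_ratio_def)
  next
    case (step1 i)
    then show ?case using rec[of "i + 1"] T laurent_Z_mult laurent_Z_add laurent_Z_power_int by simp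
  next
    case (step2 i)
    have "qint_even_ratio (i - 1) (Suc n)
        = inverse (qq powi (2 * (int n + 1))) * (qint_even_ratio i (Suc n) - T i)"
      using rec[of i] qq_neq_0 by (simp add: field_simps)
    also have "inverse (qq powi (2 * (int n + 1))) = qq powi (- (2 * (int n + 1)))"
      by (rule power_int_minus[symmetric])
    finally show ?case using step2 T laurent_Z_mult laurent_Z_diff laurent_Z_power_int by simp
  qed
qed

lemma poly_gfactor: "poly (gfactor i) x = x\<^sup>2 - (qint (2 * int i))\<^sup>2"
  by (simp add: gfactor_def power2_eq_square algebra_simps)

lemma poly_gg_odd_qint_even:
  "poly (gg (Suc (2 * j))) (qint (2 * l)) = qint_even_prod (l - int j - 1) (2 * j + 1)"
proof (induction j)
  case 0
  then show ?case by (simp add: gg_def qint_even_prod_def)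
next
  case (Suc j)
  have "gg (Suc (2 * Suc j)) = gg (Suc (2 * j)) * gfactor (Suc j)"
    unfolding gg_odd_eq by (simp add: mult.assoc)
  then have "poly (gg (Suc (2 * Suc j))) (qint (2 * l))
      = qint_even_prod (l - int j - 1) (2 * j + 1) * ((qint (2 * l))\<^sup>2 - (qint (2 * int (Suc j)))\<^sup>2)"
    using Suc by (simp add: poly_gfactor)
  also have "(qint (2 * l))\<^sup>2 - (qint (2 * int (Suc j)))\<^sup>2
      = qint (2 * (l - int j - 1)) * qint (2 * (l - int j - 1 + int (Suc (2 * j + 1))))"
    unfolding qint_square_diff by (simp add: algebra_simps)
  also have "qint_even_prod (l - int j - 1) (2 * j + 1) * \<dots>
      = qint (2 * (l - int j - 1)) * qint_even_prod (l - int j - 1) (Suc (2 * j + 1))"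
    by (simp add: qint_even_prod_Suc algebra_simps)
  also have "\<dots> = qint_even_prod (l - int j - 1 - 1) (Suc (Suc (2 * j + 1)))"
    by (rule qint_even_prod_shift[symmetric])
  finally show ?case by (simp add: algebra_simps)
qed

lemma qint_even_split: "qq powi (2 * j) * (qint (2 * l + 2 * j) - qq powi (2 * l) * qint (2 * j)) = qint (2 * l)"
  using qq_neq_0 qdelta_neq_0 unfolding qint_eq by (simp add: qpower_simps) (simp add: field_simps)

lemma poly_gdiv_odd_qint_even:
  "poly (gdiv (Suc (2 * j))) (qint (2 * l)) = qint_even_ratio (l - int j - 1) (2 * j + 1)"
  unfolding gdiv_def qint_even_ratio_def using poly_gg_odd_qint_even[of j l]
  by (simp add: field_simps)

lemma poly_gdiv_even_qint_even:
  fixes i :: nat and l :: int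
  defines "a \<equiv> l - int (Suc i)"
  shows "poly (gdiv (2 * Suc i)) (qint (2 * l)) = qq powi (2 * int (Suc i))
    * (qint_even_ratio a (2 * Suc i) - qq powi (2 * l) * qint_even_ratio a (Suc (2 * i)))"
proof -
  have "gg (2 * Suc i) = [:0, 1:] * gg (Suc (2 * i))"
    using x_mult_gg[of "Suc (2 * i)"] by simp
  then have "poly (gdiv (2 * Suc i)) (qint (2 * l))
      = qint (2 * l) * qint_even_prod a (Suc (2 * i)) / qfact (2 * Suc i)"
    unfolding gdiv_def a_def using poly_gg_odd_qint_even[of i l] by (simp add: field_simps)
  moreover have "qfact (2 * Suc i) = qfact (Suc (2 * i)) * qint (2 * int (Suc i))"
    using qfact_Suc[of "Suc (2 * i)"] by simp
  moreover have "qint_even_prod a (2 * Suc i)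
      = qint_even_prod a (Suc (2 * i)) * qint (2 * l + 2 * int (Suc i))"
    using qint_even_prod_Suc[of a "Suc (2 * i)"] unfolding a_def by (simp add: algebra_simps)
  moreover have "qfact (Suc (2 * i)) \<noteq> 0" "qint (2 * int (Suc i)) \<noteq> 0"
    using qfact_neq_0 qint_neq_0[of "2 * int (Suc i)"] by auto
  ultimately show ?thesis
    unfolding qint_even_ratio_def using qint_even_split[of "int (Suc i)" l] by (simp add: field_simps)
qed

lemma poly_gdiv_qint_even_in_laurent_Z: "poly (gdiv k) (qint (2 * l)) \<in> laurent_Z"
proof -
  have "k = 0 \<or> k = Suc (2 * (k div 2)) \<or> k = 2 * Suc (k div 2 - 1)" by presburger
  then consider "k = 0" | j where "k = Suc (2 * j)" | i where "k = 2 * Suc i" by blast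
  then show ?thesis
  proof cases
    case 1
    then show ?thesis using laurent_Z_1 by (simp add: gdiv_def gg_def)
  next
    case 2
    then show ?thesis using poly_gdiv_odd_qint_even qint_even_ratio_in_laurent_Z by simp
  next
    case 3
    then show ?thesis using poly_gdiv_even_qint_even qint_even_ratio_in_laurent_Z
      laurent_Z_mult laurent_Z_diff laurent_Z_power_int by simp
  qed
qed

lemma poly_pdiv_qint_even_in_laurent_Z: "poly (pdiv n) (qint (2 * l)) \<in> laurent_Z"
proof (cases "n = 0")
  case True
  then show ?thesis using laurent_Z_1 by (simp add: pdiv_def)
next
  case False
  then have "n \<ge> 1" by simp
  then show ?thesis
    unfolding pdiv_expansion[OF \<open>n \<ge> 1\<close>] poly_sum
    by (auto intro!: laurent_Z_sum laurent_Z_mult laurent_Z_power_int qbinom2_in_laurent_Z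
        poly_gdiv_qint_even_in_laurent_Z)
qed

theorem proposition2p6:
  shows "(\<forall>m::nat. m \<ge> 1 \<longrightarrow>
            pdiv (2 * m) =
              (\<Sum>a = 0..m - 1. smult (qq powi ((1 - 2 * int m) * int a) * qbinom2 (m - 1) a)
                                   (gdiv (2 * m - 2 * a)))
          \<and> pdiv (2 * m - 1) =
              (\<Sum>a = 0..m - 1. smult (qq powi ((3 - 2 * int m) * int a) * qbinom2 (m - 1) a)
                                   (gdiv (2 * m - 2 * a - 1))))
       \<and> (\<forall>(n::nat) (l::int). poly (pdiv n) (qint (2 * l)) \<in> laurent_Z)"
  using pdiv_even_expansion pdiv_odd_expansion poly_pdiv_qint_even_in_laurent_Z by blast

end
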